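(* Let $n\ge4$ and let $\textnormal{Reg}(\mathcal{OCT}_n)$ be the set of regular elements of $\mathcal{OCT}_n$. Then the rank of the semigroup $\textnormal{Reg}(\mathcal{OCT}_n)$ is $3$.
   Context: $\mathcal{T}_n$ is the full transformation semigroup on $[n]=\{1,\dots,n\}$ under composition. $\alpha$ is a contraction if $|x\alpha-y\alpha|\le|x-y|$ for all $x,y$, order-preserving if $x\le y\Rightarrow x\alpha\le y\alpha$. $\mathcal{OCT}_n$ is the semigroup of order-preserving contractions; $\alpha\in\mathcal{OCT}_n$ is regular if $\alpha\beta\alpha=\alpha$ for some $\beta\in\mathcal{OCT}_n$; these form a subsemigroup. The rank of a semigroup is the minimum cardinality of a generating set. *)

theory Defs
  imports Main "HOL-Library.FuncSet"
begin

definition Tn :: "nat \<Rightarrow> (nat \<Rightarrow> nat) set" where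
  "Tn n = ({1..n} \<rightarrow>\<^sub>E {1..n})"

text \<open>Composition with maps acting on the right: x (a b) = (x a) b.\<close>
definition tcomp :: "nat \<Rightarrow> (nat \<Rightarrow> nat) \<Rightarrow> (nat \<Rightarrow> nat) \<Rightarrow> (nat \<Rightarrow> nat)" where
  "tcomp n a b = restrict (\<lambda>x. b (a x)) {1..n}"

definition order_preserving :: "nat \<Rightarrow> (nat \<Rightarrow> nat) \<Rightarrow> bool" where
  "order_preserving n a \<longleftrightarrow> (\<forall>x\<in>{1..n}. \<forall>y\<in>{1..n}. x \<le> y \<longrightarrow> a x \<le> a y)"

definition contraction :: "nat \<Rightarrow> (nat \<Rightarrow> nat) \<Rightarrow> bool" where
  "contraction n a \<longleftrightarrow>
     (\<forall>x\<in>{1..n}. \<forall>y\<in>{1..n}. \<bar>int (a x) - int (a y)\<bar> \<le> \<bar>int x - int y\<bar>)"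

definition OCT :: "nat \<Rightarrow> (nat \<Rightarrow> nat) set" where
  "OCT n = {a \<in> Tn n. order_preserving n a \<and> contraction n a}"

definition RegOCT :: "nat \<Rightarrow> (nat \<Rightarrow> nat) set" where
  "RegOCT n = {a \<in> OCT n. \<exists>b \<in> OCT n. tcomp n (tcomp n a b) a = a}"

inductive_set gen :: "nat \<Rightarrow> (nat \<Rightarrow> nat) set \<Rightarrow> (nat \<Rightarrow> nat) set"
  for n :: nat and A :: "(nat \<Rightarrow> nat) set" where
  base: "a \<in> A \<Longrightarrow> a \<in> gen n A"
| step: "a \<in> gen n A \<Longrightarrow> b \<in> gen n A \<Longrightarrow> tcomp n a b \<in> gen n A"

definition sg_rank :: "nat \<Rightarrow> (nat \<Rightarrow> nat) set \<Rightarrow> nat" where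
  "sg_rank n S = (LEAST k. \<exists>A. A \<subseteq> S \<and> finite A \<and> card A = k \<and> gen n A = S)"

end

theory Submission
  imports Defs
begin

text \<open>An order-preserving contraction moves by steps of \<open>0\<close> or \<open>1\<close>. It is regular exactly when
  it is constant only at its minimum and maximum value: an interior plateau cannot be undone by
  any contraction, while otherwise the map is a clamp \<open>x \<mapsto> min B (max A (x + d))\<close> onto \<open>[A, B]\<close>,
  which is inverted on its image by a clamped translation. This property is preserved by products,
  and every such clamp is a product of three clamped translations \<open>x \<mapsto> min n (max 1 (x + k))\<close>,
  which in turn are powers of the translations by \<open>-1\<close> and \<open>+1\<close>; together with the identity
  these three maps generate. Conversely, the identity has no proper factorisation, so it belongs
  to every generating set, and a second generator alone would generate a commutative semigroup,
  whereas the translations by \<open>-1\<close> and \<open>+1\<close> do not commute.\<close>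

lemma tcomp_apply [simp]: "x \<in> {1..n} \<Longrightarrow> tcomp n a b x = b (a x)"
  by (simp add: tcomp_def)

lemma tcomp_eqI:
  assumes "f \<in> extensional {1..n}" and "\<And>x. x \<in> {1..n} \<Longrightarrow> b (a x) = f x"
  shows "tcomp n a b = f"
  using assms by (intro extensionalityI[of _ "{1..n}"]) (auto simp: tcomp_def)

lemma tcomp_in_Tn: "a \<in> Tn n \<Longrightarrow> b \<in> Tn n \<Longrightarrow> tcomp n a b \<in> Tn n"
  by (auto simp: Tn_def tcomp_def)

lemma tcomp_assoc: "a \<in> Tn n \<Longrightarrow> tcomp n (tcomp n a b) c = tcomp n a (tcomp n b c)"
  by (auto simp: tcomp_def Tn_def fun_eq_iff)

definition idn :: "nat \<Rightarrow> nat \<Rightarrow> nat" where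
  "idn n = (\<lambda>x\<in>{1..n}. x)"

lemma tcomp_idn_left: "a \<in> Tn n \<Longrightarrow> tcomp n (idn n) a = a"
  by (auto simp: tcomp_def Tn_def idn_def fun_eq_iff)

lemma tcomp_idn_right: "a \<in> Tn n \<Longrightarrow> tcomp n a (idn n) = a"
  by (auto simp: tcomp_def Tn_def idn_def fun_eq_iff PiE_def extensional_def)

lemma OCT_Tn: "a \<in> OCT n \<Longrightarrow> a \<in> Tn n"
  by (simp add: OCT_def)

lemma OCT_extensional: "a \<in> OCT n \<Longrightarrow> a \<in> extensional {1..n}"
  by (auto simp: OCT_def Tn_def PiE_def)

lemma OCT_into: "a \<in> OCT n \<Longrightarrow> x \<in> {1..n} \<Longrightarrow> a x \<in> {1..n}"
  by (auto simp: OCT_def Tn_def)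

lemma OCT_mono: "a \<in> OCT n \<Longrightarrow> x \<in> {1..n} \<Longrightarrow> y \<in> {1..n} \<Longrightarrow> x \<le> y \<Longrightarrow> a x \<le> a y"
  by (auto simp: OCT_def order_preserving_def)

lemma OCT_contraction:
  "a \<in> OCT n \<Longrightarrow> x \<in> {1..n} \<Longrightarrow> y \<in> {1..n} \<Longrightarrow> \<bar>int (a x) - int (a y)\<bar> \<le> \<bar>int x - int y\<bar>"
  by (auto simp: OCT_def contraction_def)

lemma OCT_Suc_cases:
  assumes "a \<in> OCT n" "1 \<le> x" "x < n"
  shows "a (Suc x) = a x \<or> a (Suc x) = Suc (a x)"
proof -
  have x: "x \<in> {1..n}" "Suc x \<in> {1..n}" using assms by auto
  have "a x \<le> a (Suc x)" using OCT_mono[OF assms(1) x] by simp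
  moreover have "\<bar>int (a x) - int (a (Suc x))\<bar> \<le> \<bar>int x - int (Suc x)\<bar>"
    using OCT_contraction[OF assms(1) x] .
  ultimately show ?thesis by auto
qed

lemma tcomp_in_OCT:
  assumes a: "a \<in> OCT n" and b: "b \<in> OCT n"
  shows "tcomp n a b \<in> OCT n"
proof -
  have "\<bar>int (b (a x)) - int (b (a y))\<bar> \<le> \<bar>int x - int y\<bar>" if "x \<in> {1..n}" "y \<in> {1..n}" for x y
  proof -
    have "\<bar>int (b (a x)) - int (b (a y))\<bar> \<le> \<bar>int (a x) - int (a y)\<bar>"
      using OCT_contraction[OF b] OCT_into[OF a] that by blast
    also have "\<dots> \<le> \<bar>int x - int y\<bar>"
      using OCT_contraction[OF a that] .
    finally show ?thesis .
  qed
  then show ?thesis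
    using a b OCT_into[OF a] OCT_mono[OF a] OCT_mono[OF b] tcomp_in_Tn[OF OCT_Tn OCT_Tn]
    by (auto simp: OCT_def order_preserving_def contraction_def)
qed

lemma OCT_attains_between:
  assumes a: "a \<in> OCT n" and "a 1 \<le> y" "y \<le> a m" "m \<in> {1..n}"
  shows "y \<in> a ` {1..n}"
  using assms(3,4)
proof (induction m)
  case 0
  then show ?case by simp
next
  case (Suc m)
  consider "m = 0" | "y \<le> a m" "m \<noteq> 0" | "a m < y" "m \<noteq> 0" by linarith
  then show ?case
  proof cases
    case 1
    then show ?thesis using Suc.prems assms(2) by (auto intro: rev_image_eqI[of 1])
  next
    case 2
    then show ?thesis using Suc by auto
  next
    case 3
    then have "a (Suc m) = y"
      using OCT_Suc_cases[OF a, of m] Suc.prems by auto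
    then show ?thesis using Suc.prems by (auto intro: rev_image_eqI[of "Suc m"])
  qed
qed

definition flat_only_at_ends :: "nat \<Rightarrow> (nat \<Rightarrow> nat) \<Rightarrow> bool" where
  "flat_only_at_ends n a \<longleftrightarrow>
     (\<forall>x. 1 \<le> x \<longrightarrow> x < n \<longrightarrow> a (Suc x) = a x \<longrightarrow> a x = a 1 \<or> a x = a n)"

lemma RegOCT_flat_only_at_ends:
  assumes "f \<in> RegOCT n"
  shows "flat_only_at_ends n f"
  unfolding flat_only_at_ends_def
proof (intro allI impI)
  fix x assume x: "1 \<le> x" "x < n" and flat: "f (Suc x) = f x"
  obtain g where f: "f \<in> OCT n" and g: "g \<in> OCT n" and fgf: "tcomp n (tcomp n f g) f = f"
    using assms by (auto simp: RegOCT_def)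
  have f_g: "f (g y) = y" if y: "y \<in> f ` {1..n}" for y
  proof -
    obtain z where z: "z \<in> {1..n}" "y = f z" using y by blast
    then show ?thesis using fun_cong[OF fgf, of z] OCT_into[OF f z(1)] by simp
  qed
  have g_Suc: "g (Suc y) = Suc (g y)" if y: "y \<in> f ` {1..n}" "Suc y \<in> f ` {1..n}" for y
  proof -
    have "1 \<le> y" "y < n" using y OCT_into[OF f] by fastforce+
    then have "g (Suc y) = g y \<or> g (Suc y) = Suc (g y)" by (rule OCT_Suc_cases[OF g])
    moreover have "g (Suc y) \<noteq> g y" using f_g[OF y(1)] f_g[OF y(2)] by (metis n_not_Suc_n)
    ultimately show ?thesis by simp
  qed
  have xs: "x \<in> {1..n}" "Suc x \<in> {1..n}" "1 \<in> {1..n}" "n \<in> {1..n}" using x by auto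
  show "f x = f 1 \<or> f x = f n"
  proof (rule ccontr)
    assume "\<not> (f x = f 1 \<or> f x = f n)"
    moreover have "f 1 \<le> f x" "f x \<le> f n" using OCT_mono[OF f] xs x by auto
    ultimately have v: "f 1 < f x" "f x < f n" by auto
    text \<open>The section \<open>g\<close> maps the values \<open>f x - 1, f x, f x + 1\<close> to consecutive points,
      so the fibre of \<open>f x\<close> is the single point \<open>g (f x)\<close>.\<close>
    have img: "f x - 1 \<in> f ` {1..n}" "f x \<in> f ` {1..n}" "Suc (f x) \<in> f ` {1..n}"
      using OCT_attains_between[OF f _ _ xs(4), of "f x - 1"]
        OCT_attains_between[OF f _ _ xs(4), of "Suc (f x)"] v xs(1) by simp_all
    have below: "Suc (g (f x - 1)) = g (f x)"
      using g_Suc[of "f x - 1"] img v by (simp add: Suc_diff_Suc)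
    have above: "g (Suc (f x)) = Suc (g (f x))"
      using g_Suc[OF img(2,3)] .
    have "f ` {1..n} \<subseteq> {1..n}" using OCT_into[OF f] by blast
    then have gs: "g (f x - 1) \<in> {1..n}" "g (Suc (f x)) \<in> {1..n}"
      using OCT_into[OF g] img(1,3) by (meson subsetD)+
    have "g (f x - 1) < x"
    proof (rule ccontr)
      assume "\<not> g (f x - 1) < x"
      then have "f x \<le> f (g (f x - 1))" using OCT_mono[OF f xs(1) gs(1)] by simp
      then show False using f_g[OF img(1)] v by simp
    qed
    moreover have "Suc x < g (Suc (f x))"
    proof (rule ccontr)
      assume "\<not> Suc x < g (Suc (f x))"
      then have "f (g (Suc (f x))) \<le> f (Suc x)" using OCT_mono[OF f gs(2) xs(2)] by simp
      then show False using f_g[OF img(3)] flat by simp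
    qed
    ultimately show False using below above by simp
  qed
qed

lemma flat_only_at_ends_tcomp:
  assumes a: "a \<in> OCT n" and b: "b \<in> OCT n"
    and fa: "flat_only_at_ends n a" and fb: "flat_only_at_ends n b"
  shows "flat_only_at_ends n (tcomp n a b)"
  unfolding flat_only_at_ends_def
proof (intro allI impI)
  fix x assume x: "1 \<le> x" "x < n" and flat: "tcomp n a b (Suc x) = tcomp n a b x"
  have xs: "x \<in> {1..n}" "Suc x \<in> {1..n}" "1 \<in> {1..n}" "n \<in> {1..n}" using x by auto
  have "b (a x) = b (a 1) \<or> b (a x) = b (a n)"
  proof (cases "a (Suc x) = a x")
    case True
    then show ?thesis using fa x unfolding flat_only_at_ends_def by metis
  next
    case False
    then have step: "a (Suc x) = Suc (a x)" using OCT_Suc_cases[OF a x] by simp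
    have ax: "1 \<le> a x" "a x < n" using OCT_into[OF a xs(2)] OCT_into[OF a xs(1)] step by auto
    have "b (Suc (a x)) = b (a x)" using flat step xs by simp
    then have "b (a x) = b 1 \<or> b (a x) = b n" using fb ax unfolding flat_only_at_ends_def by metis
    moreover have "b 1 \<le> b (a 1)" "b (a 1) \<le> b (a x)" "b (a x) \<le> b (a n)" "b (a n) \<le> b n"
      using OCT_mono[OF b] OCT_mono[OF a] OCT_into[OF a] xs x by auto
    ultimately show ?thesis by linarith
  qed
  then show "tcomp n a b x = tcomp n a b 1 \<or> tcomp n a b x = tcomp n a b n" using xs by simp
qed

definition clamp :: "nat \<Rightarrow> int \<Rightarrow> int \<Rightarrow> int \<Rightarrow> nat \<Rightarrow> nat" where
  "clamp n A B d = (\<lambda>x\<in>{1..n}. nat (min B (max A (int x + d))))"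

text \<open>Parameters for which \<open>clamp n A B d\<close> maps \<open>[n]\<close> onto \<open>[A, B]\<close>.\<close>
definition clamp_onto :: "nat \<Rightarrow> int \<Rightarrow> int \<Rightarrow> int \<Rightarrow> bool" where
  "clamp_onto n A B d \<longleftrightarrow> 1 \<le> A \<and> A \<le> B \<and> B \<le> int n \<and> 1 + d \<le> A \<and> B \<le> int n + d"

lemma clamp_apply:
  "x \<in> {1..n} \<Longrightarrow> 0 \<le> A \<Longrightarrow> A \<le> B \<Longrightarrow> int (clamp n A B d x) = min B (max A (int x + d))"
  by (simp add: clamp_def max_def)

lemma clamp_in_OCT: "1 \<le> A \<Longrightarrow> A \<le> B \<Longrightarrow> B \<le> int n \<Longrightarrow> clamp n A B d \<in> OCT n"
  unfolding OCT_def Tn_def clamp_def order_preserving_def contraction_def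
  by (auto simp: PiE_def extensional_def)

lemma clamp_flat_only_at_ends:
  assumes "1 \<le> A" "A \<le> B" "B \<le> int n"
  shows "flat_only_at_ends n (clamp n A B d)"
  unfolding flat_only_at_ends_def
proof (intro allI impI)
  fix x assume x: "1 \<le> x" "x < n" and flat: "clamp n A B d (Suc x) = clamp n A B d x"
  have xs: "x \<in> {1..n}" "Suc x \<in> {1..n}" "1 \<in> {1..n}" "n \<in> {1..n}" using x by auto
  have A0: "0 \<le> A" using assms by simp
  have "min B (max A (int x + 1 + d)) = min B (max A (int x + d))"
    using arg_cong[OF flat, of int] clamp_apply[OF xs(1) A0 assms(2)] clamp_apply[OF xs(2) A0 assms(2)]
    by (simp add: add.assoc)
  then have "int x + 1 + d \<le> A \<or> B \<le> int x + d" by (auto simp: min_def max_def split: if_splits)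
  then have "int (clamp n A B d x) = int (clamp n A B d 1) \<or> int (clamp n A B d x) = int (clamp n A B d n)"
    using clamp_apply[OF xs(1) A0 assms(2)] clamp_apply[OF xs(3) A0 assms(2)]
      clamp_apply[OF xs(4) A0 assms(2)] x assms(2)
    by (auto simp: min_def max_def)
  then show "clamp n A B d x = clamp n A B d 1 \<or> clamp n A B d x = clamp n A B d n" by simp
qed

text \<open>\<open>m\<close> is the last point of the initial plateau; past it the map can only climb with slope
  one until it reaches its maximum.\<close>
lemma OCT_flat_only_at_ends_apply:
  assumes f: "f \<in> OCT n" and flat: "flat_only_at_ends n f"
    and m: "m \<in> {1..n}" "f m = f 1" and m_max: "\<forall>y\<in>{1..n}. f y = f 1 \<longrightarrow> y \<le> m"
    and x: "x \<in> {1..n}"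
  shows "int (f x) = min (int (f n)) (max (int (f 1)) (int x + int (f 1) - int m))"
proof (cases "x \<le> m")
  case True
  have "1 \<in> {1..n}" using m by simp
  then have "f 1 \<le> f x" "f x \<le> f m" using OCT_mono[OF f _ x] OCT_mono[OF f x m(1)] True x by auto
  then have "f x = f 1" using m(2) by simp
  moreover have "f 1 \<le> f n" using OCT_mono[OF f] x by simp
  ultimately show ?thesis using True by simp
next
  case False
  have climb: "int (f y) = min (int (f n)) (int y + int (f 1) - int m)" if "m \<le> y" "y \<le> n" for y
    using that
  proof (induction y rule: dec_induct)
    case base
    show ?case using m OCT_mono[OF f] by simp
  next
    case (step x)
    have xs: "x \<in> {1..n}" "Suc x \<in> {1..n}" using step m by auto
    have not_initial: "f (Suc x) \<noteq> f 1" using m_max xs(2) step by auto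
    moreover have "f (Suc x) = f x \<or> f (Suc x) = Suc (f x)"
      using OCT_Suc_cases[OF f] xs by simp
    moreover have "f x = f n" if "f (Suc x) = f x"
    proof -
      have "f x = f 1 \<or> f x = f n" using flat xs that unfolding flat_only_at_ends_def by simp
      then show ?thesis using not_initial that by simp
    qed
    moreover have "f (Suc x) \<le> f n" using OCT_mono[OF f xs(2)] xs by simp
    moreover have "int (f x) = min (int (f n)) (int x + int (f 1) - int m)" using step by simp
    ultimately show ?case by (auto simp: min_def split: if_splits)
  qed
  show ?thesis using climb[of x] False x by simp
qed

lemma OCT_flat_only_at_ends_imp_clamp:
  assumes f: "f \<in> OCT n" and flat: "flat_only_at_ends n f" and n: "1 \<le> n"
  obtains A B d where "clamp_onto n A B d" "f = clamp n A B d"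
proof -
  define m where "m = Max {x \<in> {1..n}. f x = f 1}"
  have "m \<in> {x \<in> {1..n}. f x = f 1}" unfolding m_def using n by (intro Max_in) auto
  then have m: "m \<in> {1..n}" "f m = f 1" by auto
  have m_max: "\<forall>y\<in>{1..n}. f y = f 1 \<longrightarrow> y \<le> m"
    unfolding m_def by (auto intro: Max_ge)
  note f_apply = OCT_flat_only_at_ends_apply[OF f flat m m_max]
  define A where "A = int (f 1)"
  define B where "B = int (f n)"
  define d where "d = A - int m"
  have ends: "1 \<in> {1..n}" "n \<in> {1..n}" using n by auto
  have AB: "1 \<le> A" "A \<le> B" "B \<le> int n"
    using OCT_into[OF f ends(1)] OCT_into[OF f ends(2)] OCT_mono[OF f ends] n
    by (auto simp: A_def B_def)
  have "f = clamp n A B d"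
  proof (rule extensionalityI[OF OCT_extensional[OF f] OCT_extensional[OF clamp_in_OCT[OF AB]]])
    fix x assume x: "x \<in> {1..n}"
    show "f x = clamp n A B d x"
      using f_apply[OF x] clamp_apply[OF x, of A B d] AB by (simp add: A_def B_def d_def)
  qed
  moreover have "clamp_onto n A B d"
    using f_apply[OF ends(2)] m AB by (simp add: clamp_onto_def A_def B_def d_def)
  ultimately show ?thesis using that by blast
qed

lemma clamp_onto_in_RegOCT:
  assumes c: "clamp_onto n A B d"
  shows "clamp n A B d \<in> RegOCT n"
proof -
  let ?f = "clamp n A B d" and ?g = "clamp n 1 (int n) (- d)"
  have AB: "1 \<le> A" "A \<le> B" "B \<le> int n" using c by (auto simp: clamp_onto_def)
  have f: "?f \<in> OCT n" using clamp_in_OCT[OF AB] .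
  have g: "?g \<in> OCT n" using clamp_in_OCT[of 1 "int n" n "- d"] AB by linarith
  have "tcomp n (tcomp n ?f ?g) ?f = ?f"
  proof (rule tcomp_eqI[OF OCT_extensional[OF f]])
    fix x assume x: "x \<in> {1..n}"
    have fx: "?f x \<in> {1..n}" using OCT_into[OF f x] .
    have gfx: "?g (?f x) \<in> {1..n}" using OCT_into[OF g fx] .
    have "A \<le> int (?f x)" "int (?f x) \<le> B"
      using clamp_apply[OF x, of A B d] AB by simp_all
    moreover have "int (?g (?f x)) = min (int n) (max 1 (int (?f x) - d))"
      using clamp_apply[OF fx, of 1 "int n" "- d"] AB by simp
    ultimately have "int (?g (?f x)) = int (?f x) - d"
      using c unfolding clamp_onto_def by linarith
    then have "int (?f (?g (?f x))) = min B (max A (int (?f x)))"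
      using clamp_apply[OF gfx, of A B d] AB by simp
    also have "\<dots> = int (?f x)"
      using clamp_apply[OF x, of A B d] AB by simp
    finally show "?f (tcomp n ?f ?g x) = ?f x" using x by simp
  qed
  then show ?thesis using f g by (auto simp: RegOCT_def)
qed

lemma RegOCT_eq_flat_only_at_ends:
  assumes "1 \<le> n"
  shows "RegOCT n = {f \<in> OCT n. flat_only_at_ends n f}"
proof
  show "RegOCT n \<subseteq> {f \<in> OCT n. flat_only_at_ends n f}"
    using RegOCT_flat_only_at_ends by (auto simp: RegOCT_def)
  show "{f \<in> OCT n. flat_only_at_ends n f} \<subseteq> RegOCT n"
  proof
    fix f assume "f \<in> {f \<in> OCT n. flat_only_at_ends n f}"
    then have "f \<in> OCT n" "flat_only_at_ends n f" by simp_all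
    then obtain A B d where "clamp_onto n A B d" "f = clamp n A B d"
      using OCT_flat_only_at_ends_imp_clamp assms by metis
    then show "f \<in> RegOCT n" using clamp_onto_in_RegOCT by simp
  qed
qed

lemma tcomp_in_RegOCT:
  assumes "1 \<le> n" "a \<in> RegOCT n" "b \<in> RegOCT n"
  shows "tcomp n a b \<in> RegOCT n"
  using assms(2,3) tcomp_in_OCT flat_only_at_ends_tcomp
  unfolding RegOCT_eq_flat_only_at_ends[OF assms(1)] by simp

definition shift :: "nat \<Rightarrow> int \<Rightarrow> nat \<Rightarrow> nat" where
  "shift n d = clamp n 1 (int n) d"

definition shift_generators :: "nat \<Rightarrow> (nat \<Rightarrow> nat) set" where
  "shift_generators n = {idn n, shift n (-1), shift n 1}"

lemma shift_apply: "x \<in> {1..n} \<Longrightarrow> int (shift n d x) = min (int n) (max 1 (int x + d))"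
  unfolding shift_def by (rule clamp_apply) auto

lemma shift_zero: "shift n 0 = idn n"
  by (auto simp: shift_def clamp_def idn_def fun_eq_iff)

lemma shift_in_OCT: "1 \<le> n \<Longrightarrow> shift n d \<in> OCT n"
  unfolding shift_def by (rule clamp_in_OCT) auto

lemma shift_in_RegOCT: "1 \<le> n \<Longrightarrow> shift n d \<in> RegOCT n"
  using shift_in_OCT clamp_flat_only_at_ends[of 1 "int n" n d]
  by (simp add: RegOCT_eq_flat_only_at_ends shift_def)

text \<open>Clamped translations in the same direction add up; in opposite directions they do not,
  since the first one may already have merged points at an end of \<open>[n]\<close>.\<close>
lemma tcomp_shift_shift:
  assumes "(d \<le> 0 \<and> e \<le> 0) \<or> (0 \<le> d \<and> 0 \<le> e)"
  shows "tcomp n (shift n d) (shift n e) = shift n (d + e)"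
proof (rule tcomp_eqI)
  show "shift n (d + e) \<in> extensional {1..n}" by (simp add: shift_def clamp_def)
  fix x assume x: "x \<in> {1..n}"
  have y: "shift n d x \<in> {1..n}" using OCT_into[OF shift_in_OCT x] x by simp
  have "int (shift n e (shift n d x)) = min (int n) (max 1 (int (shift n d x) + e))"
    using shift_apply[OF y] .
  also have "\<dots> = min (int n) (max 1 (int x + (d + e)))"
    using shift_apply[OF x, of d] assms x by (auto simp: min_def max_def)
  also have "\<dots> = int (shift n (d + e) x)" using shift_apply[OF x] by simp
  finally show "shift n e (shift n d x) = shift n (d + e) x" by simp
qed

lemma shift_in_gen: "shift n d \<in> gen n (shift_generators n)"
proof (induction d rule: int_induct[where k = 0])
  case base
  then show ?case by (auto intro: gen.base simp: shift_generators_def shift_zero)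
next
  case (step1 d)
  then have "tcomp n (shift n d) (shift n 1) \<in> gen n (shift_generators n)"
    by (auto intro: gen.intros simp: shift_generators_def)
  then show ?case using step1 by (simp add: tcomp_shift_shift)
next
  case (step2 d)
  then have "tcomp n (shift n d) (shift n (-1)) \<in> gen n (shift_generators n)"
    by (auto intro: gen.intros simp: shift_generators_def)
  then show ?case using step2 by (simp add: tcomp_shift_shift)
qed

text \<open>Push \<open>[n]\<close> down so that the lower plateau becomes \<open>1\<close>, move it up so that the upper
  plateau reaches \<open>n\<close>, then translate \<open>[A, B]\<close> into place.\<close>
lemma clamp_onto_eq_tcomp_shifts:
  assumes c: "clamp_onto n A B d"
  shows "clamp n A B d =
    tcomp n (tcomp n (shift n (d + 1 - A)) (shift n (int n + A - 1 - B))) (shift n (B - int n))"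
    (is "_ = tcomp n (tcomp n ?K ?J) ?I")
proof (rule sym, rule tcomp_eqI)
  have AB: "1 \<le> A" "A \<le> B" "B \<le> int n" using c by (auto simp: clamp_onto_def)
  show "clamp n A B d \<in> extensional {1..n}" by (simp add: clamp_def)
  fix x assume x: "x \<in> {1..n}"
  have y: "?K x \<in> {1..n}" using OCT_into[OF shift_in_OCT x] x by simp
  have z: "?J (?K x) \<in> {1..n}" using OCT_into[OF shift_in_OCT y] x by simp
  have "int (?I (?J (?K x))) = int (clamp n A B d x)"
    using shift_apply[OF x] shift_apply[OF y] shift_apply[OF z] clamp_apply[OF x, of A B d] AB c
    by (simp add: clamp_onto_def min_def max_def)
  then show "?I (tcomp n ?K ?J x) = clamp n A B d x" using x by simp
qed

lemma gen_minimal: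
  assumes "A \<subseteq> S" and "\<And>a b. a \<in> S \<Longrightarrow> b \<in> S \<Longrightarrow> tcomp n a b \<in> S"
  shows "gen n A \<subseteq> S"
proof
  fix x assume "x \<in> gen n A"
  then show "x \<in> S" by induction (use assms in auto)
qed

lemma gen_shift_generators:
  assumes n: "1 \<le> n"
  shows "gen n (shift_generators n) = RegOCT n"
proof
  have "shift_generators n \<subseteq> RegOCT n"
    by (simp add: shift_generators_def shift_in_RegOCT[OF n] flip: shift_zero)
  then show "gen n (shift_generators n) \<subseteq> RegOCT n"
    using gen_minimal tcomp_in_RegOCT[OF n] by metis
  show "RegOCT n \<subseteq> gen n (shift_generators n)"
  proof
    fix f assume f: "f \<in> RegOCT n"
    then have "f \<in> OCT n" "flat_only_at_ends n f"
      using RegOCT_flat_only_at_ends by (auto simp: RegOCT_def)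
    then obtain A B d where "clamp_onto n A B d" "f = clamp n A B d"
      using OCT_flat_only_at_ends_imp_clamp n by metis
    then show "f \<in> gen n (shift_generators n)"
      using clamp_onto_eq_tcomp_shifts shift_in_gen gen.step by metis
  qed
qed

lemma card_shift_generators:
  assumes "3 \<le> n"
  shows "card (shift_generators n) = 3"
proof -
  have "2 \<in> {1..n}" using assms by simp
  then have "idn n 2 = 2" "shift n (-1) 2 = 1" "shift n 1 2 = 3"
    using assms by (simp_all add: idn_def shift_def clamp_def)
  then have "idn n \<noteq> shift n (-1)" "idn n \<noteq> shift n 1" "shift n (-1) \<noteq> shift n 1"
    by (auto dest!: fun_cong[where x = 2])
  then show ?thesis by (simp add: shift_generators_def)
qed

lemma OCT_tcomp_eq_idn:
  assumes a: "a \<in> OCT n" and b: "b \<in> OCT n" and ab: "tcomp n a b = idn n"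
  shows "a = idn n"
proof -
  have ba: "b (a x) = x" if "x \<in> {1..n}" for x
    using fun_cong[OF ab, of x] that by (simp add: idn_def)
  text \<open>Being injective, \<open>a\<close> climbs with slope one everywhere, and it stays inside \<open>[n]\<close>.\<close>
  have slope: "int (a x) = int x + int (a 1) - 1" if "x \<in> {1..n}" for x
    using that
  proof (induction x)
    case (Suc x)
    show ?case
    proof (cases "x = 0")
      case False
      then have x: "1 \<le> x" "x < n" using Suc.prems by auto
      have "a (Suc x) \<noteq> a x" using ba[of x] ba[of "Suc x"] x by force
      then have "a (Suc x) = Suc (a x)" using OCT_Suc_cases[OF a x] by simp
      then show ?thesis using Suc.IH x by simp
    qed simp
  qed simp
  have "a x = x" if x: "x \<in> {1..n}" for x
  proof -
    have ends: "1 \<in> {1..n}" "n \<in> {1..n}" using x by auto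
    have "a 1 = 1" using slope[OF ends(2)] OCT_into[OF a ends(2)] OCT_into[OF a ends(1)] by auto
    then show ?thesis using slope[OF x] by simp
  qed
  then show ?thesis
    using OCT_extensional[OF a] by (intro extensionalityI[of _ "{1..n}"]) (auto simp: idn_def)
qed

lemma idn_in_gen_imp_mem:
  assumes A: "A \<subseteq> OCT n" and "idn n \<in> gen n A"
  shows "idn n \<in> A"
proof -
  have "gen n A \<subseteq> OCT n" using gen_minimal[OF A] tcomp_in_OCT by metis
  have "x = idn n \<Longrightarrow> idn n \<in> A" if "x \<in> gen n A" for x
    using that
  proof induction
    case (step a b)
    then show ?case using OCT_tcomp_eq_idn \<open>gen n A \<subseteq> OCT n\<close> by blast
  qed simp
  then show ?thesis using assms(2) by blast
qed

lemma tcomp_commute_gen: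
  assumes A: "A \<subseteq> Tn n" and c: "c \<in> Tn n" and comm: "\<And>a. a \<in> A \<Longrightarrow> tcomp n c a = tcomp n a c"
    and x: "x \<in> gen n A"
  shows "tcomp n c x = tcomp n x c"
  using x
proof induction
  case (base a)
  then show ?case by (rule comm)
next
  case (step a b)
  have "a \<in> Tn n" using step.hyps gen_minimal[OF A] tcomp_in_Tn by blast
  then have "tcomp n c (tcomp n a b) = tcomp n (tcomp n a c) b"
    using tcomp_assoc c step.IH by metis
  also have "\<dots> = tcomp n a (tcomp n b c)"
    using tcomp_assoc \<open>a \<in> Tn n\<close> step.IH by metis
  finally show ?case using tcomp_assoc \<open>a \<in> Tn n\<close> by metis
qed

lemma gen_commutative:
  assumes A: "A \<subseteq> Tn n" and comm: "\<And>a b. a \<in> A \<Longrightarrow> b \<in> A \<Longrightarrow> tcomp n a b = tcomp n b a"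
    and x: "x \<in> gen n A" and y: "y \<in> gen n A"
  shows "tcomp n x y = tcomp n y x"
proof -
  have "y \<in> Tn n" using y gen_minimal[OF A] tcomp_in_Tn by blast
  moreover have "tcomp n y a = tcomp n a y" if "a \<in> A" for a
    using tcomp_commute_gen[OF A _ _ y, of a] that A comm by (metis subsetD)
  ultimately show ?thesis using tcomp_commute_gen[OF A _ _ x, of y] by metis
qed

lemma tcomp_shifts_noncommute:
  assumes "2 \<le> n"
  shows "tcomp n (shift n (-1)) (shift n 1) \<noteq> tcomp n (shift n 1) (shift n (-1))"
proof -
  have "1 \<in> {1..n}" "2 \<in> {1..n}" using assms by auto
  then have "tcomp n (shift n (-1)) (shift n 1) 1 = 2" "tcomp n (shift n 1) (shift n (-1)) 1 = 1"
    using assms by (simp_all add: shift_def clamp_def)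
  then show ?thesis by auto
qed

lemma card_generating_set_RegOCT:
  assumes n: "2 \<le> n" and A: "A \<subseteq> RegOCT n" "finite A" "gen n A = RegOCT n"
  shows "3 \<le> card A"
proof (rule ccontr)
  assume small: "\<not> 3 \<le> card A"
  have AO: "A \<subseteq> OCT n" using A(1) by (auto simp: RegOCT_def)
  then have AT: "A \<subseteq> Tn n" using OCT_Tn by blast
  have "idn n \<in> A"
    using idn_in_gen_imp_mem[OF AO] shift_in_RegOCT[of n 0] n A(3) by (simp add: shift_zero)
  have "tcomp n a b = tcomp n b a" if ab: "a \<in> A" "b \<in> A" for a b
  proof (cases "a = b \<or> a = idn n \<or> b = idn n")
    case True
    then show ?thesis using ab AT tcomp_idn_left tcomp_idn_right by auto
  next
    case False
    then have "card {idn n, a, b} = 3" by auto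
    moreover have "card {idn n, a, b} \<le> card A"
      using \<open>idn n \<in> A\<close> ab A(2) by (intro card_mono) auto
    ultimately show ?thesis using small by simp
  qed
  moreover have "shift n (-1) \<in> gen n A" "shift n 1 \<in> gen n A"
    using A(3) shift_in_RegOCT n by auto
  ultimately show False using gen_commutative[OF AT] tcomp_shifts_noncommute[OF n] by blast
qed

theorem corollary13:
  fixes n :: nat
  assumes "n \<ge> 4"
  shows "sg_rank n (RegOCT n) = 3"
  unfolding sg_rank_def
proof (rule Least_equality)
  have gen: "gen n (shift_generators n) = RegOCT n" using gen_shift_generators assms by simp
  then have "shift_generators n \<subseteq> RegOCT n" using gen.base by blast
  moreover have "finite (shift_generators n)" by (simp add: shift_generators_def)
  moreover have "card (shift_generators n) = 3" using card_shift_generators assms by simp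
  ultimately show "\<exists>A. A \<subseteq> RegOCT n \<and> finite A \<and> card A = 3 \<and> gen n A = RegOCT n"
    using gen by (intro exI[of _ "shift_generators n"]) simp
next
  fix k assume "\<exists>A. A \<subseteq> RegOCT n \<and> finite A \<and> card A = k \<and> gen n A = RegOCT n"
  then show "3 \<le> k" using card_generating_set_RegOCT[of n] assms by auto
qed

end
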